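(* Every $2$-regular curve $\gamma: I\to\mathbb{E}^4$ admits a generalized Bishop frame of type C and a generalized Bishop frame of type D.
   Context: A regular curve $\gamma: I\to\mathbb{E}^4$ ($I$ an open interval) is considered with arc-length parametrization; $\mathbb{T}=\gamma'$ is its unit tangent vector. It is $2$-regular if $\mathbb{T}'$ is nowhere vanishing. A frame on $\gamma$ is an ordered orthonormal frame $(\mathbb{T},\mathbb{Z}_1,\mathbb{Z}_2,\mathbb{Z}_3)$ of smooth vector fields along $\gamma$ whose first vector is $\mathbb{T}$; it is identified with the smooth map $\mathbb{Z}: I\to O(4)$ whose rows are these vectors. Its coefficient matrix is the $\mathfrak{o}(4)$-valued function $X$ with $\mathbb{Z}'=X\mathbb{Z}$. A frame is of type C, resp. D, if, after possibly permuting $\mathbb{Z}_1,\mathbb{Z}_2,\mathbb{Z}_3$ (keeping $\mathbb{T}$ first), its coefficient matrix has the form, for some smooth functions $x_1,x_2,x_3$: Type C: $\begin{pmatrix}0&x_1&x_2&0\\-x_1&0&0&x_3\\-x_2&0&0&0\\0&-x_3&0&0\end{pmatrix}$; Type D: $\begin{pmatrix}0&x_1&0&0\\-x_1&0&x_2&x_3\\0&-x_2&0&0\\0&-x_3&0&0\end{pmatrix}$. *)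

theory Defs
  imports "HOL-Analysis.Analysis"
begin

definition smooth_on :: "real set \<Rightarrow> (real \<Rightarrow> 'a::real_normed_vector) \<Rightarrow> bool" where
  "smooth_on I f \<longleftrightarrow> (\<exists>D :: nat \<Rightarrow> real \<Rightarrow> 'a. D 0 = f \<and>
      (\<forall>n. \<forall>t\<in>I. (D n has_vector_derivative D (Suc n) t) (at t)))"

definition open_interval :: "real set \<Rightarrow> bool" where
  "open_interval I \<longleftrightarrow> is_interval I \<and> open I \<and> I \<noteq> {}"

definition tangent :: "(real \<Rightarrow> real^4) \<Rightarrow> real \<Rightarrow> real^4" where
  "tangent \<gamma> t = vector_derivative \<gamma> (at t)"

definition arclength_curve :: "real set \<Rightarrow> (real \<Rightarrow> real^4) \<Rightarrow> bool" where
  "arclength_curve I \<gamma> \<longleftrightarrow> open_interval I \<and> smooth_on I \<gamma> \<and>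
      (\<forall>t\<in>I. norm (tangent \<gamma> t) = 1)"

definition two_regular :: "real set \<Rightarrow> (real \<Rightarrow> real^4) \<Rightarrow> bool" where
  "two_regular I \<gamma> \<longleftrightarrow> arclength_curve I \<gamma> \<and>
      (\<forall>t\<in>I. vector_derivative (tangent \<gamma>) (at t) \<noteq> 0)"

definition frame_on :: "real set \<Rightarrow> (real \<Rightarrow> real^4) \<Rightarrow> (real \<Rightarrow> real^4^4) \<Rightarrow> bool" where
  "frame_on I \<gamma> Z \<longleftrightarrow> smooth_on I Z \<and>
      (\<forall>t\<in>I. orthogonal_matrix (Z t) \<and> Z t $ 1 = tangent \<gamma> t)"

definition coeff_matrix :: "real set \<Rightarrow> (real \<Rightarrow> real^4^4) \<Rightarrow> (real \<Rightarrow> real^4^4) \<Rightarrow> bool" where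
  "coeff_matrix I Z X \<longleftrightarrow> (\<forall>t\<in>I. (Z has_vector_derivative (X t ** Z t)) (at t))"

definition permute_frame :: "(4 \<Rightarrow> 4) \<Rightarrow> (real \<Rightarrow> real^4^4) \<Rightarrow> real \<Rightarrow> real^4^4" where
  "permute_frame p Z t = (\<chi> i. Z t $ p i)"

definition typeC_matrix :: "real \<Rightarrow> real \<Rightarrow> real \<Rightarrow> real^4^4" where
  "typeC_matrix x1 x2 x3 = vector [vector [0, x1, x2, 0], vector [-x1, 0, 0, x3],
                                   vector [-x2, 0, 0, 0], vector [0, -x3, 0, 0]]"

definition typeD_matrix :: "real \<Rightarrow> real \<Rightarrow> real \<Rightarrow> real^4^4" where
  "typeD_matrix x1 x2 x3 = vector [vector [0, x1, 0, 0], vector [-x1, 0, x2, x3],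
                                   vector [0, -x2, 0, 0], vector [0, -x3, 0, 0]]"

definition frame_of_type :: "(real \<Rightarrow> real \<Rightarrow> real \<Rightarrow> real^4^4) \<Rightarrow> real set \<Rightarrow>
    (real \<Rightarrow> real^4) \<Rightarrow> (real \<Rightarrow> real^4^4) \<Rightarrow> bool" where
  "frame_of_type M I \<gamma> Z \<longleftrightarrow> frame_on I \<gamma> Z \<and>
     (\<exists>p. p permutes (UNIV - {1}) \<and>
       (\<exists>x1 x2 x3 :: real \<Rightarrow> real. smooth_on I x1 \<and> smooth_on I x2 \<and> smooth_on I x3 \<and>
          coeff_matrix I (permute_frame p Z) (\<lambda>t. M (x1 t) (x2 t) (x3 t))))"

end

(*
  A Bishop frame (T, B2, B3, B4) exists along the curve: its normal rows solve the linear
  equation V' = -(T' . V) T, which is solved globally by Picard iteration, and solutions of this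
  skew-symmetric system keep their inner products. In Bishop coordinates T' = k1 B2 + k2 B3 + k3 B4
  with a nowhere vanishing curvature vector k : I -> R^3. Rotating the normal part of the Bishop
  frame by a smooth orthonormal frame (a, b, c) of R^3 gives a frame whose coefficient matrix has
  first row (0, k.a, k.b, k.c) and, up to skew-symmetry, the entries a'.b, a'.c, b'.c.
  Type C: the cone over the curve k is the image of a 2-dimensional parameter space, hence
  negligible in R^3, so some fixed unit vector u is never parallel to k; take b = u, a the
  normalised component of k orthogonal to u, and c = u x a.
  Type D: take a = k/|k| and let b, c be parallel along a on the sphere, again a linear equation.
*)
theory Submission
  imports Defs
begin

section \<open>Smooth functions of a real variable\<close>

fun Ck_on :: "nat \<Rightarrow> real set \<Rightarrow> (real \<Rightarrow> 'a::real_normed_vector) \<Rightarrow> bool" where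
  "Ck_on 0 I f \<longleftrightarrow> True"
| "Ck_on (Suc k) I f \<longleftrightarrow> (\<exists>f'. (\<forall>t\<in>I. (f has_vector_derivative f' t) (at t)) \<and> Ck_on k I f')"

lemma Ck_on_SucD: "Ck_on (Suc k) I f \<Longrightarrow> Ck_on k I f"
  by (induction k arbitrary: f) auto

lemma Ck_on_cong:
  assumes "open I" "Ck_on k I f" "\<And>t. t \<in> I \<Longrightarrow> f t = g t"
  shows "Ck_on k I g"
proof (cases k)
  case (Suc m)
  with assms(2) obtain f' where "\<forall>t\<in>I. (f has_vector_derivative f' t) (at t)" "Ck_on m I f'"
    by auto
  with assms(1,3) Suc show ?thesis
    by (auto intro: has_vector_derivative_transform_within_open)
qed simp

lemma Ck_on_const: "Ck_on k I (\<lambda>t. c)"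
  by (induction k arbitrary: c) (auto intro!: exI[of _ "\<lambda>t. 0"])

lemma Ck_on_add: "Ck_on k I f \<Longrightarrow> Ck_on k I g \<Longrightarrow> Ck_on k I (\<lambda>t. f t + g t)"
  by (induction k arbitrary: f g) (fastforce intro: has_vector_derivative_add)+

lemma Ck_on_sum:
  "finite S \<Longrightarrow> (\<And>i. i \<in> S \<Longrightarrow> Ck_on k I (f i)) \<Longrightarrow> Ck_on k I (\<lambda>t. \<Sum>i\<in>S. f i t)"
  by (induction S rule: finite_induct) (auto intro: Ck_on_add Ck_on_const)

lemma Ck_on_linear:
  fixes L :: "'a::real_normed_vector \<Rightarrow> 'b::real_normed_vector"
  assumes "bounded_linear L"
  shows "Ck_on k I f \<Longrightarrow> Ck_on k I (\<lambda>t. L (f t))"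
proof (induction k arbitrary: f)
  case (Suc k)
  then obtain f' where "\<forall>t\<in>I. (f has_vector_derivative f' t) (at t)" "Ck_on k I f'"
    by auto
  with Suc.IH show ?case
    by (auto intro!: exI[of _ "\<lambda>t. L (f' t)"] bounded_linear.has_vector_derivative[OF assms])
qed simp

lemma Ck_on_bilinear:
  fixes prod :: "'a::real_normed_vector \<Rightarrow> 'b::real_normed_vector \<Rightarrow> 'c::real_normed_vector"
  assumes prod: "bounded_bilinear prod"
  shows "Ck_on k I f \<Longrightarrow> Ck_on k I g \<Longrightarrow> Ck_on k I (\<lambda>t. prod (f t) (g t))"
proof (induction k arbitrary: f g)
  case (Suc k)
  then obtain f' g' where f': "\<forall>t\<in>I. (f has_vector_derivative f' t) (at t)" "Ck_on k I f'"
    and g': "\<forall>t\<in>I. (g has_vector_derivative g' t) (at t)" "Ck_on k I g'"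
    by auto
  have "\<forall>t\<in>I. ((\<lambda>t. prod (f t) (g t)) has_vector_derivative prod (f t) (g' t) + prod (f' t) (g t)) (at t)"
    using f' g' bounded_bilinear.has_vector_derivative[OF prod] by blast
  moreover have "Ck_on k I (\<lambda>t. prod (f t) (g' t) + prod (f' t) (g t))"
    using Suc.IH f'(2) g'(2) Ck_on_SucD[OF Suc.prems(1)] Ck_on_SucD[OF Suc.prems(2)]
    by (intro Ck_on_add)
  ultimately show ?case by auto
qed simp

lemma Ck_on_compose:
  fixes g :: "real \<Rightarrow> real" and h :: "real \<Rightarrow> 'a::real_normed_vector"
  assumes "open S"
  shows "Ck_on k S h \<Longrightarrow> Ck_on k I g \<Longrightarrow> g ` I \<subseteq> S \<Longrightarrow> Ck_on k I (\<lambda>t. h (g t))"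
proof (induction k arbitrary: h g)
  case (Suc k)
  then obtain h' g' where h': "\<forall>s\<in>S. (h has_vector_derivative h' s) (at s)" "Ck_on k S h'"
    and g': "\<forall>t\<in>I. (g has_vector_derivative g' t) (at t)" "Ck_on k I g'"
    by auto
  have "((\<lambda>t. h (g t)) has_vector_derivative g' t *\<^sub>R h' (g t)) (at t)" if "t \<in> I" for t
    using vector_diff_chain_within[of g "g' t" t UNIV h "h' (g t)"] h' g' Suc.prems(3) that
    by (auto simp: o_def has_vector_derivative_at_within)
  moreover have "Ck_on k I (\<lambda>t. g' t *\<^sub>R h' (g t))"
    using Suc.IH h'(2) g'(2) Ck_on_SucD[OF Suc.prems(2)] Suc.prems(3)
    by (intro Ck_on_bilinear[OF bounded_bilinear_scaleR])
  ultimately show ?case by (auto intro!: exI[of _ "\<lambda>t. g' t *\<^sub>R h' (g t)"])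
qed simp

lemma Ck_on_powr: "Ck_on k {0<..} (\<lambda>x. c * x powr a)"
proof (induction k arbitrary: c a)
  case (Suc k)
  have "((\<lambda>x. c * x powr a) has_vector_derivative (c * a) * x powr (a - 1)) (at x)" if "x > 0" for x
    using that by (auto simp: has_real_derivative_iff_has_vector_derivative[symmetric]
        intro!: derivative_eq_intros)
  with Suc show ?case by (auto intro!: exI[of _ "\<lambda>x. (c * a) * x powr (a - 1)"])
qed simp

lemma Ck_on_vector_derivative:
  assumes "open I" "Ck_on (Suc k) I f"
  shows "Ck_on k I (\<lambda>t. vector_derivative f (at t))"
proof -
  obtain f' where f': "\<forall>t\<in>I. (f has_vector_derivative f' t) (at t)" and "Ck_on k I f'"
    using assms(2) by auto
  show ?thesis
  proof (rule Ck_on_cong[OF assms(1) \<open>Ck_on k I f'\<close>])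
    show "f' t = vector_derivative f (at t)" if "t \<in> I" for t
      using f' that by (metis vector_derivative_at)
  qed
qed

lemma smooth_on_iff_Ck_on:
  assumes "open I"
  shows "smooth_on I f \<longleftrightarrow> (\<forall>k. Ck_on k I f)"
proof
  assume "smooth_on I f"
  then obtain D where D: "D 0 = f" "\<forall>n. \<forall>t\<in>I. (D n has_vector_derivative D (Suc n) t) (at t)"
    unfolding smooth_on_def by blast
  have "Ck_on k I (D n)" for k n
    by (induction k arbitrary: n) (use D(2) in auto)
  with D(1) show "\<forall>k. Ck_on k I f" by blast
next
  assume Ck: "\<forall>k. Ck_on k I f"
  define D where "D n = ((\<lambda>g t. vector_derivative g (at t)) ^^ n) f" for n
  have D_Suc: "D (Suc n) = (\<lambda>t. vector_derivative (D n) (at t))" for n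
    by (simp add: D_def)
  have D_Ck: "Ck_on k I (D n)" for k n
  proof (induction n arbitrary: k)
    case 0
    with Ck show ?case by (simp add: D_def)
  next
    case (Suc n)
    show ?case
      unfolding D_Suc by (rule Ck_on_vector_derivative[OF assms Suc])
  qed
  have "(D n has_vector_derivative D (Suc n) t) (at t)" if "t \<in> I" for n t
    using D_Ck[of 1 n] that unfolding D_Suc by (auto simp: vector_derivative_at)
  then show "smooth_on I f"
    unfolding smooth_on_def by (auto intro!: exI[of _ D] simp: D_def)
qed

lemma smooth_on_has_vector_derivative:
  "smooth_on I f \<Longrightarrow> t \<in> I \<Longrightarrow> (f has_vector_derivative vector_derivative f (at t)) (at t)"
  unfolding smooth_on_def by (metis vector_derivative_at)

lemma smooth_on_imp_continuous_on: "smooth_on I f \<Longrightarrow> continuous_on I f"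
  by (metis continuous_at_imp_continuous_on has_vector_derivative_continuous
      smooth_on_has_vector_derivative)

lemma smooth_on_vector_derivative:
  assumes "open I" "smooth_on I f"
  shows "smooth_on I (\<lambda>t. vector_derivative f (at t))"
  using assms(2) Ck_on_vector_derivative[OF assms(1)] unfolding smooth_on_iff_Ck_on[OF assms(1)]
  by blast

lemma smooth_on_const: "open I \<Longrightarrow> smooth_on I (\<lambda>t. c)"
  by (simp add: smooth_on_iff_Ck_on Ck_on_const)

lemma smooth_on_add:
  "open I \<Longrightarrow> smooth_on I f \<Longrightarrow> smooth_on I g \<Longrightarrow> smooth_on I (\<lambda>t. f t + g t)"
  by (simp add: smooth_on_iff_Ck_on Ck_on_add)

lemma smooth_on_diff:
  "open I \<Longrightarrow> smooth_on I f \<Longrightarrow> smooth_on I g \<Longrightarrow> smooth_on I (\<lambda>t. f t - g t)"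
  using Ck_on_add[of _ I f "\<lambda>t. - g t"] Ck_on_linear[OF bounded_linear_minus[OF bounded_linear_ident], of _ I g]
  by (simp add: smooth_on_iff_Ck_on)

lemma smooth_on_sum:
  "open I \<Longrightarrow> finite S \<Longrightarrow> (\<And>i. i \<in> S \<Longrightarrow> smooth_on I (f i)) \<Longrightarrow>
    smooth_on I (\<lambda>t. \<Sum>i\<in>S. f i t)"
  by (simp add: smooth_on_iff_Ck_on Ck_on_sum)

lemma smooth_on_linear:
  fixes L :: "'a::real_normed_vector \<Rightarrow> 'b::real_normed_vector"
  shows "open I \<Longrightarrow> bounded_linear L \<Longrightarrow> smooth_on I f \<Longrightarrow> smooth_on I (\<lambda>t. L (f t))"
  by (simp add: smooth_on_iff_Ck_on Ck_on_linear)

lemma smooth_on_bilinear: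
  fixes prod :: "'a::real_normed_vector \<Rightarrow> 'b::real_normed_vector \<Rightarrow> 'c::real_normed_vector"
  shows "open I \<Longrightarrow> bounded_bilinear prod \<Longrightarrow> smooth_on I f \<Longrightarrow> smooth_on I g \<Longrightarrow>
    smooth_on I (\<lambda>t. prod (f t) (g t))"
  by (simp add: smooth_on_iff_Ck_on Ck_on_bilinear)

lemma smooth_on_sgn:
  fixes v :: "real \<Rightarrow> 'a::real_inner"
  assumes I: "open I" and v: "smooth_on I v" "\<And>t. t \<in> I \<Longrightarrow> v t \<noteq> 0"
  shows "smooth_on I (\<lambda>t. sgn (v t))"
proof -
  have sgn_eq: "((v t \<bullet> v t) powr (- (1 / 2))) *\<^sub>R v t = sgn (v t)" if "t \<in> I" for t
  proof -
    have "(v t \<bullet> v t) powr (- (1 / 2)) = inverse (norm (v t))"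
      unfolding powr_minus norm_eq_sqrt_inner using v(2)[OF that]
      by (simp add: powr_half_sqrt)
    then show ?thesis by (simp add: sgn_div_norm)
  qed
  have Ck: "Ck_on k I (\<lambda>t. ((v t \<bullet> v t) powr (- (1 / 2))) *\<^sub>R v t)" for k
    using v I
    by (intro Ck_on_bilinear[OF bounded_bilinear_scaleR] Ck_on_compose[OF _ Ck_on_powr[of _ 1, simplified]]
        Ck_on_bilinear[OF bounded_bilinear_inner]) (auto simp: smooth_on_iff_Ck_on)
  show ?thesis
    unfolding smooth_on_iff_Ck_on[OF I] using Ck_on_cong[OF I Ck sgn_eq] by blast
qed

lemma norm_axis: "norm (axis i x) = norm x"
proof -
  have "(\<Sum>j\<in>UNIV. (norm (axis i x $ j))\<^sup>2) = (\<Sum>j\<in>UNIV. if j = i then (norm x)\<^sup>2 else 0)"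
    by (intro sum.cong) (auto simp: axis_def)
  then show ?thesis
    by (simp add: norm_vec_def L2_set_def)
qed

lemma bounded_linear_axis: "bounded_linear (axis i :: 'a::real_normed_vector \<Rightarrow> 'a^'n)"
proof (rule bounded_linear_intro[where K = 1])
  show "norm (axis i x) \<le> norm x * 1" for x :: 'a
    by (simp only: norm_axis mult_1_right order_refl)
qed (simp_all add: vec_eq_iff axis_def)

lemma vec_eq_sum_axis: "x = (\<Sum>i\<in>UNIV. axis i (x $ i) :: 'a::real_normed_vector^'n)"
  by (simp add: vec_eq_iff axis_def)

lemma smooth_on_vec:
  fixes f :: "real \<Rightarrow> 'a::real_normed_vector^'n"
  assumes "open I" "\<And>i. smooth_on I (\<lambda>t. f t $ i)"
  shows "smooth_on I f"
proof -
  have "smooth_on I (\<lambda>t. \<Sum>i\<in>UNIV. axis i (f t $ i))"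
    using assms by (intro smooth_on_sum smooth_on_linear[OF _ bounded_linear_axis]) auto
  then show ?thesis
    by (simp flip: vec_eq_sum_axis)
qed

lemma has_vector_derivative_vec:
  fixes f :: "real \<Rightarrow> 'a::real_normed_vector^'n"
  assumes "\<And>i. ((\<lambda>t. f t $ i) has_vector_derivative f' $ i) (at t)"
  shows "(f has_vector_derivative f') (at t)"
proof -
  have "((\<lambda>t. \<Sum>i\<in>UNIV. axis i (f t $ i)) has_vector_derivative (\<Sum>i\<in>UNIV. axis i (f' $ i))) (at t)"
    by (intro has_vector_derivative_sum bounded_linear.has_vector_derivative[OF bounded_linear_axis] assms)
  then show ?thesis
    by (simp add: vec_eq_sum_axis[symmetric])
qed

lemma vector_4 [simp]:
  "(vector [a, b, c, d] :: 'a::zero^4) $ 1 = a"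
  "(vector [a, b, c, d] :: 'a::zero^4) $ 2 = b"
  "(vector [a, b, c, d] :: 'a::zero^4) $ 3 = c"
  "(vector [a, b, c, d] :: 'a::zero^4) $ 4 = d"
  unfolding vector_def by simp_all

lemma smooth_on_vector_4:
  fixes a b c d :: "real \<Rightarrow> 'a::real_normed_vector"
  assumes "open I" "smooth_on I a" "smooth_on I b" "smooth_on I c" "smooth_on I d"
  shows "smooth_on I (\<lambda>t. vector [a t, b t, c t, d t] :: 'a^4)"
proof (rule smooth_on_vec[OF assms(1)])
  fix i :: 4
  show "smooth_on I (\<lambda>t. (vector [a t, b t, c t, d t] :: 'a^4) $ i)"
    using assms exhaust_4[of i] by auto
qed

lemma has_vector_derivative_vector_4:
  fixes a b c d :: "real \<Rightarrow> 'a::real_normed_vector"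
  assumes "(a has_vector_derivative a') (at t)" "(b has_vector_derivative b') (at t)"
    "(c has_vector_derivative c') (at t)" "(d has_vector_derivative d') (at t)"
  shows "((\<lambda>t. vector [a t, b t, c t, d t] :: 'a^4) has_vector_derivative vector [a', b', c', d']) (at t)"
proof (rule has_vector_derivative_vec)
  fix i :: 4
  show "((\<lambda>t. (vector [a t, b t, c t, d t] :: 'a^4) $ i) has_vector_derivative vector [a', b', c', d'] $ i) (at t)"
    using assms exhaust_4[of i] by auto
qed

section \<open>Linear differential equations\<close>

lemma open_interval_Icc_around:
  fixes I :: "real set"
  assumes "is_interval I" "open I" "x \<in> I" "y \<in> I"
  obtains a b where "{a..b} \<subseteq> I" "a < x" "a < y" "x < b" "y < b"
proof -
  obtain e where e: "e > 0" "ball (min x y) e \<subseteq> I" "ball (max x y) e \<subseteq> I"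
  proof -
    obtain e1 e2 where "e1 > 0" "ball (min x y) e1 \<subseteq> I" "e2 > 0" "ball (max x y) e2 \<subseteq> I"
      using assms open_contains_ball by (metis min_def max_def)
    then show thesis
      by (intro that[of "min e1 e2"]) auto
  qed
  have "min x y - e / 2 \<in> ball (min x y) e" "max x y + e / 2 \<in> ball (max x y) e"
    using e(1) by (simp_all add: dist_real_def)
  then have "min x y - e / 2 \<in> I" "max x y + e / 2 \<in> I"
    using e(2,3) by blast+
  then have "{min x y - e / 2..max x y + e / 2} \<subseteq> I"
    by (meson assms(1) atLeastAtMost_iff mem_is_interval_1_I subsetI)
  then show thesis
    using e(1) by (intro that) auto
qed

definition integral_from :: "real \<Rightarrow> (real \<Rightarrow> 'a::banach) \<Rightarrow> real \<Rightarrow> 'a" where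
  "integral_from t0 g t = (if t0 \<le> t then integral {t0..t} g else - integral {t..t0} g)"

lemma integral_from_eq_diff:
  fixes g :: "real \<Rightarrow> 'a::banach"
  assumes "a \<le> t0" "a \<le> t" "g integrable_on {a..max t t0}"
  shows "integral_from t0 g t = integral {a..t} g - integral {a..t0} g"
proof (cases "t0 \<le> t")
  case True
  then have "integral {a..t0} g + integral {t0..t} g = integral {a..t} g"
    using assms by (intro Henstock_Kurzweil_Integration.integral_combine) (auto simp: max_def)
  with True show ?thesis by (simp add: integral_from_def algebra_simps)
next
  case False
  then have "integral {a..t} g + integral {t..t0} g = integral {a..t0} g"
    using assms by (intro Henstock_Kurzweil_Integration.integral_combine) (auto simp: max_def)
  with False show ?thesis by (simp add: integral_from_def algebra_simps)
qed

lemma integral_from_has_vector_derivative: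
  fixes g :: "real \<Rightarrow> 'a::banach"
  assumes I: "is_interval I" "open I" "t0 \<in> I" "t \<in> I" and g: "continuous_on I g"
  shows "(integral_from t0 g has_vector_derivative g t) (at t)"
proof -
  obtain a b where ab: "{a..b} \<subseteq> I" "a < t" "a < t0" "t < b" "t0 < b"
    using open_interval_Icc_around[OF I] .
  have g_ab: "continuous_on {a..b} g"
    using g ab(1) continuous_on_subset by blast
  have "((\<lambda>u. integral {a..u} g) has_vector_derivative g t) (at t within {a..b})"
    using ab by (intro integral_has_vector_derivative[OF g_ab]) auto
  then have "((\<lambda>u. integral {a..u} g) has_vector_derivative g t) (at t)"
    using ab at_within_Icc_at[of a t b] by simp
  then have "((\<lambda>u. integral {a..u} g - integral {a..t0} g) has_vector_derivative g t) (at t)"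
    using has_vector_derivative_diff[OF _ has_vector_derivative_const] by fastforce
  then show ?thesis
  proof (rule has_vector_derivative_transform_within_open)
    fix u assume "u \<in> {a<..<b}"
    then show "integral {a..u} g - integral {a..t0} g = integral_from t0 g u"
      using ab by (subst integral_from_eq_diff[of a])
        (auto intro!: integrable_continuous_real continuous_on_subset[OF g_ab])
  qed (use ab in auto)
qed

lemma norm_le_power_if_derivative_le:
  fixes f :: "real \<Rightarrow> 'a::real_normed_vector"
  assumes I: "is_interval I" "t0 \<in> I" "t \<in> I" and "f t0 = 0"
    and f': "\<And>s. s \<in> I \<Longrightarrow> (f has_vector_derivative f' s) (at s)"
    and bound: "\<And>s. s \<in> I \<Longrightarrow> norm (f' s) \<le> C * \<bar>s - t0\<bar> ^ n"
  shows "norm (f t) \<le> C * \<bar>t - t0\<bar> ^ Suc n / Suc n"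
proof -
  have sub: "{t0..t} \<subseteq> I" "{t..t0} \<subseteq> I"
    using I by (meson atLeastAtMost_iff mem_is_interval_1_I subsetI)+
  have cont: "continuous_on {a..b} f" if "{a..b} \<subseteq> I" for a b
    using that f' has_vector_derivative_continuous
    by (blast intro: continuous_at_imp_continuous_on)
  consider "t0 < t" | "t = t0" | "t < t0" by linarith
  then show ?thesis
  proof cases
    case 1
    have "norm (f t - f t0) \<le> C * (t - t0) ^ Suc n / Suc n - C * (t0 - t0) ^ Suc n / Suc n"
    proof (rule differentiable_bound_general[OF 1 cont[OF sub(1)]])
      show "((\<lambda>s. C * (s - t0) ^ Suc n / Suc n) has_vector_derivative C * (s - t0) ^ n) (at s)" for s
        unfolding has_real_derivative_iff_has_vector_derivative[symmetric]
        by (rule derivative_eq_intros refl | simp)+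
      show "norm (f' s) \<le> C * (s - t0) ^ n" if "t0 < s" "s < t" for s
        using bound[of s] sub(1) that by (simp add: subset_iff)
      show "(f has_vector_derivative f' s) (at s)" if "t0 < s" "s < t" for s
        using f'[of s] sub(1) that by (simp add: subset_iff)
      show "continuous_on {t0..t} (\<lambda>s. C * (s - t0) ^ Suc n / Suc n)"
        by (intro continuous_intros) auto
    qed
    with 1 \<open>f t0 = 0\<close> show ?thesis by simp
  next
    case 3
    have "norm (f t0 - f t) \<le> - C * (t0 - t0) ^ Suc n / Suc n - - C * (t0 - t) ^ Suc n / Suc n"
    proof (rule differentiable_bound_general[OF 3 cont[OF sub(2)]])
      show "((\<lambda>s. - C * (t0 - s) ^ Suc n / Suc n) has_vector_derivative C * (t0 - s) ^ n) (at s)" for s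
        unfolding has_real_derivative_iff_has_vector_derivative[symmetric]
        by (rule derivative_eq_intros refl | simp)+
      show "norm (f' s) \<le> C * (t0 - s) ^ n" if "t < s" "s < t0" for s
        using bound[of s] sub(2) that by (simp add: subset_iff)
      show "(f has_vector_derivative f' s) (at s)" if "t < s" "s < t0" for s
        using f'[of s] sub(2) that by (simp add: subset_iff)
      show "continuous_on {t..t0} (\<lambda>s. - C * (t0 - s) ^ Suc n / Suc n)"
        by (intro continuous_intros) auto
    qed
    with 3 \<open>f t0 = 0\<close> show ?thesis by simp
  qed (simp add: \<open>f t0 = 0\<close>)
qed

lemma has_vector_derivative_series:
  fixes f :: "nat \<Rightarrow> real \<Rightarrow> 'a::banach"
  assumes "convex S"
    and "\<And>n x. x \<in> S \<Longrightarrow> (f n has_vector_derivative f' n x) (at x within S)"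
    and "uniform_limit S (\<lambda>n x. \<Sum>i<n. f' i x) g' sequentially"
    and "x0 \<in> S" "summable (\<lambda>n. f n x0)"
  shows "\<exists>g. \<forall>x\<in>S. (\<lambda>n. f n x) sums g x \<and> (g has_vector_derivative g' x) (at x within S)"
  unfolding has_vector_derivative_def
proof (rule has_derivative_series[where f' = "\<lambda>n x h. h *\<^sub>R f' n x"])
  show "\<forall>\<^sub>F n in sequentially. \<forall>x\<in>S. \<forall>h. norm ((\<Sum>i<n. h *\<^sub>R f' i x) - h *\<^sub>R g' x) \<le> e * norm h"
    if "e > 0" for e
  proof -
    have "\<forall>\<^sub>F n in sequentially. \<forall>x\<in>S. norm ((\<Sum>i<n. f' i x) - g' x) < e"
      using assms(3) \<open>e > 0\<close> unfolding uniform_limit_iff dist_norm by blast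
    moreover have "norm ((\<Sum>i<n. h *\<^sub>R f' i x) - h *\<^sub>R g' x) \<le> e * norm h"
      if "norm ((\<Sum>i<n. f' i x) - g' x) < e" for n x h
    proof -
      have "norm ((\<Sum>i<n. h *\<^sub>R f' i x) - h *\<^sub>R g' x) = \<bar>h\<bar> * norm ((\<Sum>i<n. f' i x) - g' x)"
        by (simp add: scaleR_sum_right[symmetric] scaleR_diff_right[symmetric])
      also have "\<dots> \<le> e * norm h"
        using mult_left_mono[OF less_imp_le[OF that] abs_ge_zero[of h]] by (simp add: mult.commute)
      finally show ?thesis .
    qed
    ultimately show ?thesis
      by (auto elim: eventually_mono)
  qed
qed (use assms in \<open>auto simp: has_vector_derivative_def summable_sums\<close>)

lemma bounded_bilinear_bound_on_compact:
  fixes act :: "'a::real_normed_vector \<Rightarrow> 'b::real_normed_vector \<Rightarrow> 'c::real_normed_vector"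
  assumes "bounded_bilinear act" "continuous_on S A" "compact S"
  obtains K where "K \<ge> 0" "\<And>s v. s \<in> S \<Longrightarrow> norm (act (A s) v) \<le> K * norm v"
proof -
  obtain MA where MA: "\<And>s. s \<in> S \<Longrightarrow> norm (A s) \<le> MA"
    using compact_imp_bounded[OF compact_continuous_image[OF assms(2,3)]]
    unfolding bounded_iff by (meson imageI)
  obtain Kb where Kb: "Kb > 0" "\<And>x y. norm (act x y) \<le> norm x * norm y * Kb"
    using bounded_bilinear.pos_bounded[OF assms(1)] by blast
  show thesis
  proof (rule that[of "max 0 MA * Kb"])
    fix s and v :: 'b assume "s \<in> S"
    then have "norm (A s) * norm v * Kb \<le> max 0 MA * norm v * Kb"
      using MA[of s] Kb(1) by (intro mult_right_mono) auto
    with Kb(2)[of "A s" v] show "norm (act (A s) v) \<le> max 0 MA * Kb * norm v"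
      by (simp add: algebra_simps)
  qed (use Kb in auto)
qed

primrec picard_iterate ::
  "('a \<Rightarrow> 'b \<Rightarrow> 'b) \<Rightarrow> (real \<Rightarrow> 'a) \<Rightarrow> real \<Rightarrow> 'b::banach \<Rightarrow> nat \<Rightarrow> real \<Rightarrow> 'b" where
  "picard_iterate act A t0 v0 0 = (\<lambda>t. v0)"
| "picard_iterate act A t0 v0 (Suc n) =
     integral_from t0 (\<lambda>s. act (A s) (picard_iterate act A t0 v0 n s))"

context
  fixes act :: "'a::real_normed_vector \<Rightarrow> 'b::banach \<Rightarrow> 'b" and A :: "real \<Rightarrow> 'a"
    and I :: "real set" and t0 :: real and v0 :: 'b
  assumes act: "bounded_bilinear act" and I: "is_interval I" "open I" "t0 \<in> I"
    and A: "continuous_on I A"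
begin

private abbreviation "P \<equiv> picard_iterate act A t0 v0"

lemma continuous_on_picard_iterate: "continuous_on I (P n)"
proof (induction n)
  case (Suc n)
  have "continuous_on I (\<lambda>s. act (A s) (P n s))"
    using bounded_bilinear.continuous_on[OF act A Suc] .
  then have "isCont (P (Suc n)) t" if "t \<in> I" for t
    using has_vector_derivative_continuous[OF integral_from_has_vector_derivative[OF I that]] by simp
  then show ?case
    by (simp add: continuous_at_imp_continuous_on)
qed simp

lemma picard_iterate_has_vector_derivative:
  "t \<in> I \<Longrightarrow> (P (Suc n) has_vector_derivative act (A t) (P n t)) (at t)"
  using integral_from_has_vector_derivative[OF I _
      bounded_bilinear.continuous_on[OF act A continuous_on_picard_iterate]]
  by simp

lemma norm_picard_iterate_le:
  assumes ab: "{a..b} \<subseteq> I" "t0 \<in> {a..b}" "s \<in> {a..b}"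
    and K: "K \<ge> 0" "\<And>s v. s \<in> {a..b} \<Longrightarrow> norm (act (A s) v) \<le> K * norm v"
  shows "norm (P n s) \<le> norm v0 * (K * \<bar>s - t0\<bar>) ^ n / fact n"
  using ab(3)
proof (induction n arbitrary: s)
  case (Suc n)
  have "norm (P (Suc n) s) \<le> (K * (norm v0 * K ^ n / fact n)) * \<bar>s - t0\<bar> ^ Suc n / Suc n"
  proof (rule norm_le_power_if_derivative_le[OF is_interval_cc ab(2) Suc.prems])
    show "P (Suc n) t0 = 0"
      by (simp add: integral_from_def)
    show "(P (Suc n) has_vector_derivative act (A r) (P n r)) (at r)" if "r \<in> {a..b}" for r
      using that ab(1) by (intro picard_iterate_has_vector_derivative) auto
    show "norm (act (A r) (P n r)) \<le> K * (norm v0 * K ^ n / fact n) * \<bar>r - t0\<bar> ^ n"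
      if "r \<in> {a..b}" for r
      using order_trans[OF K(2)[OF that] mult_left_mono[OF Suc.IH[OF that] K(1)]]
      by (simp add: power_mult_distrib algebra_simps)
  qed
  then show ?case
    by (simp add: power_mult_distrib field_simps)
qed simp

lemma picard_iterate_dominated:
  assumes ab: "{a..b} \<subseteq> I" "t0 \<in> {a..b}"
  obtains K M where "K \<ge> 0" "\<And>s v. s \<in> {a..b} \<Longrightarrow> norm (act (A s) v) \<le> K * norm v"
    "summable M" "\<And>n s. s \<in> {a..b} \<Longrightarrow> norm (P n s) \<le> M n"
proof -
  obtain K where K: "K \<ge> 0" "\<And>s v. s \<in> {a..b} \<Longrightarrow> norm (act (A s) v) \<le> K * norm v"
    using bounded_bilinear_bound_on_compact[OF act continuous_on_subset[OF A ab(1)] compact_Icc]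
    by blast
  define M where "M n = norm v0 * (K * (b - a)) ^ n / fact n" for n
  have "M = (\<lambda>n. norm v0 * (inverse (fact n) * (K * (b - a)) ^ n))"
    by (simp add: M_def fun_eq_iff divide_inverse mult_ac)
  then have "summable M"
    by (simp only:) (rule summable_mult[OF summable_exp])
  moreover have "norm (P n s) \<le> M n" if "s \<in> {a..b}" for n s
  proof -
    have "norm (P n s) \<le> norm v0 * (K * \<bar>s - t0\<bar>) ^ n / fact n"
      by (rule norm_picard_iterate_le[OF ab that K])
    also have "\<dots> \<le> M n"
      unfolding M_def using K(1) that ab(2)
      by (intro divide_right_mono mult_left_mono power_mono) auto
    finally show ?thesis .
  qed
  ultimately show thesis
    using that K by blast
qed

lemma picard_series_has_vector_derivative:
  assumes ab: "{a..b} \<subseteq> I" "t0 \<in> {a..b}" and t: "t \<in> {a<..<b}"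
  shows "((\<lambda>t. \<Sum>n. P n t) has_vector_derivative act (A t) (\<Sum>n. P n t)) (at t)"
proof -
  obtain K M where K: "K \<ge> 0" "\<And>s v. s \<in> {a..b} \<Longrightarrow> norm (act (A s) v) \<le> K * norm v"
    and M: "summable M" "\<And>n s. s \<in> {a..b} \<Longrightarrow> norm (P n s) \<le> M n"
    using picard_iterate_dominated[OF ab] by blast
  define S where "S = {a<..<b}"
  have S: "t \<in> S" "S \<subseteq> {a..b}" "convex S" "open S"
    using t by (auto simp: S_def)
  have summable_P: "summable (\<lambda>n. P n x)" if "x \<in> S" for x
    by (rule summable_comparison_test'[OF M(1)]) (use M(2) S(2) that in blast)
  have uniform:
    "uniform_limit S (\<lambda>n x. \<Sum>i<n. act (A x) (P i x)) (\<lambda>x. \<Sum>i. act (A x) (P i x)) sequentially"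
  proof (rule Weierstrass_m_test[OF _ summable_mult[OF M(1), of K]])
    show "norm (act (A x) (P n x)) \<le> K * M n" if "x \<in> S" for n x
      using S(2) that order_trans[OF K(2) mult_left_mono[OF M(2) K(1)]] by (meson subsetD)
  qed
  have "\<exists>g. \<forall>x\<in>S. (\<lambda>n. P (Suc n) x) sums g x \<and>
      (g has_vector_derivative (\<Sum>i. act (A x) (P i x))) (at x within S)"
  proof (rule has_vector_derivative_series[where f = "\<lambda>n. P (Suc n)", OF S(3) _ uniform S(1)])
    show "(P (Suc n) has_vector_derivative act (A x) (P n x)) (at x within S)" if "x \<in> S" for n x
      using that S(2) ab(1)
      by (intro has_vector_derivative_at_within[OF picard_iterate_has_vector_derivative]) auto
    show "summable (\<lambda>n. P (Suc n) t)"
      using summable_P[OF S(1)] by (subst summable_Suc_iff)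
  qed
  then obtain g where g: "\<forall>x\<in>S. (\<lambda>n. P (Suc n) x) sums g x \<and>
      (g has_vector_derivative (\<Sum>i. act (A x) (P i x))) (at x within S)"
    by blast
  have "((\<lambda>x. v0 + g x) has_vector_derivative (\<Sum>i. act (A t) (P i t))) (at t)"
    using g S(1) has_vector_derivative_add[OF has_vector_derivative_const]
    by (fastforce simp: at_within_open[OF S(1,4)])
  then have "((\<lambda>t. \<Sum>n. P n t) has_vector_derivative (\<Sum>i. act (A t) (P i t))) (at t)"
  proof (rule has_vector_derivative_transform_within_open[OF _ S(4,1)])
    show "v0 + g x = (\<Sum>n. P n x)" if "x \<in> S" for x
      using suminf_split_head[OF summable_P[OF that]] g that by (simp add: sums_iff)
  qed
  moreover have "(\<Sum>i. act (A t) (P i t)) = act (A t) (\<Sum>n. P n t)"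
    using summable_P[OF S(1)]
    by (rule bounded_linear.suminf[OF bounded_bilinear.bounded_linear_right[OF act], symmetric])
  ultimately show ?thesis
    by simp
qed

lemma linear_ode_exists:
  obtains V where "V t0 = v0" "\<And>t. t \<in> I \<Longrightarrow> (V has_vector_derivative act (A t) (V t)) (at t)"
proof (rule that[of "\<lambda>t. \<Sum>n. P n t"])
  have "P n t0 = (if n = 0 then v0 else 0)" for n
    by (cases n) (simp_all add: integral_from_def)
  then have "(\<lambda>n. P n t0) sums v0"
    using sums_single[of 0 "\<lambda>_. v0"] by simp
  then show "(\<Sum>n. P n t0) = v0"
    by (rule sums_unique[symmetric])
  fix t assume "t \<in> I"
  then obtain a b where "{a..b} \<subseteq> I" "a < t" "a < t0" "t < b" "t0 < b"
    using open_interval_Icc_around[OF I(1,2) _ I(3)] by blast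
  then show "((\<lambda>t. \<Sum>n. P n t) has_vector_derivative act (A t) (\<Sum>n. P n t)) (at t)"
    by (intro picard_series_has_vector_derivative) auto
qed
end

lemma smooth_on_linear_ode_solution:
  fixes act :: "'a::real_normed_vector \<Rightarrow> 'b::real_normed_vector \<Rightarrow> 'b"
  assumes act: "bounded_bilinear act" and I: "open I" and A: "smooth_on I A"
    and V: "\<And>t. t \<in> I \<Longrightarrow> (V has_vector_derivative act (A t) (V t)) (at t)"
  shows "smooth_on I V"
proof -
  have "Ck_on k I V" for k
  proof (induction k)
    case (Suc k)
    have "Ck_on k I (\<lambda>t. act (A t) (V t))"
      using Ck_on_bilinear[OF act _ Suc] A by (simp add: smooth_on_iff_Ck_on[OF I])
    with V show ?case
      by (auto intro!: exI[of _ "\<lambda>t. act (A t) (V t)"])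
  qed simp
  then show ?thesis
    by (simp add: smooth_on_iff_Ck_on[OF I])
qed

lemma bounded_bilinear_matrix_vector_mult:
  "bounded_bilinear ((*v) :: real^'n^'m \<Rightarrow> real^'n \<Rightarrow> real^'m)"
proof -
  have "linear (\<lambda>A::real^'n^'m. A *v v)" for v
    by (rule linearI) (auto simp: vec_eq_iff matrix_vector_mult_def sum.distrib algebra_simps sum_distrib_left)
  then have "bilinear ((*v) :: real^'n^'m \<Rightarrow> real^'n \<Rightarrow> real^'m)"
    by (simp add: bilinear_def matrix_vector_mul_linear)
  then show ?thesis
    by (simp add: bilinear_conv_bounded_bilinear)
qed

lemma smooth_linear_ode_solutions_exist:
  fixes A :: "real \<Rightarrow> real^'n^'n" and v :: "'i \<Rightarrow> real^'n"
  assumes I: "is_interval I" "open I" "t0 \<in> I" and A: "smooth_on I A"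
  obtains V where "\<And>i. V i t0 = v i"
    "\<And>i t. t \<in> I \<Longrightarrow> (V i has_vector_derivative A t *v V i t) (at t)" "\<And>i. smooth_on I (V i)"
proof -
  have "\<exists>V. V t0 = v i \<and> (\<forall>t\<in>I. (V has_vector_derivative A t *v V t) (at t))" for i
    using linear_ode_exists[OF bounded_bilinear_matrix_vector_mult I smooth_on_imp_continuous_on[OF A]]
    by metis
  then obtain V where V: "\<And>i. V i t0 = v i" "\<And>i t. t \<in> I \<Longrightarrow> (V i has_vector_derivative A t *v V i t) (at t)"
    by metis
  moreover have "smooth_on I (V i)" for i
    using smooth_on_linear_ode_solution[OF bounded_bilinear_matrix_vector_mult I(2) A] V(2) by blast
  ultimately show thesis
    using that by blast
qed

lemma inner_derivatives_sum_eq_0: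
  fixes f g :: "real \<Rightarrow> 'a::real_inner"
  assumes I: "open I" "t \<in> I" and f: "(f has_vector_derivative f') (at t)"
    and g: "(g has_vector_derivative g') (at t)" and c: "\<And>s. s \<in> I \<Longrightarrow> f s \<bullet> g s = c"
  shows "f' \<bullet> g t + f t \<bullet> g' = 0"
proof -
  have "((\<lambda>s. f s \<bullet> g s) has_vector_derivative f t \<bullet> g' + f' \<bullet> g t) (at t)"
    using bounded_bilinear.has_vector_derivative[OF bounded_bilinear_inner f g] .
  moreover have "((\<lambda>s. f s \<bullet> g s) has_vector_derivative 0) (at t)"
    by (rule has_vector_derivative_transform_within_open[OF has_vector_derivative_const[of c] I])
      (simp add: c)
  ultimately have "f t \<bullet> g' + f' \<bullet> g t = 0"
    by (rule vector_derivative_unique_at)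
  then show ?thesis
    by (simp add: add.commute)
qed

lemma inner_constant_if_skew:
  fixes V W :: "real \<Rightarrow> 'a::real_inner"
  assumes I: "is_interval I" "s \<in> I" "t \<in> I"
    and V: "\<And>t. t \<in> I \<Longrightarrow> (V has_vector_derivative F t (V t)) (at t)"
    and W: "\<And>t. t \<in> I \<Longrightarrow> (W has_vector_derivative F t (W t)) (at t)"
    and skew: "\<And>t x y. t \<in> I \<Longrightarrow> F t x \<bullet> y = - (x \<bullet> F t y)"
  shows "V s \<bullet> W s = V t \<bullet> W t"
proof -
  have "((\<lambda>t. V t \<bullet> W t) has_vector_derivative 0) (at t within I)" if "t \<in> I" for t
  proof -
    have "((\<lambda>t. V t \<bullet> W t) has_vector_derivative V t \<bullet> F t (W t) + F t (V t) \<bullet> W t) (at t)"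
      using bounded_bilinear.has_vector_derivative[OF bounded_bilinear_inner V[OF that] W[OF that]] .
    then show ?thesis
      using skew[OF that] by (simp add: has_vector_derivative_at_within)
  qed
  then obtain c where "\<And>x. x \<in> I \<Longrightarrow> V x \<bullet> W x = c"
    using has_vector_derivative_zero_constant[of I] is_interval_convex_1 I(1) by blast
  then show ?thesis
    using I by simp
qed

section \<open>Orthonormal frames\<close>

lemma orthogonal_matrix_iff_orthonormal_rows:
  fixes Q :: "real^'n^'n"
  shows "orthogonal_matrix Q \<longleftrightarrow> (\<forall>i j. Q $ i \<bullet> Q $ j = (if i = j then 1 else 0))"
proof -
  have "orthogonal_matrix Q \<longleftrightarrow> Q ** transpose Q = mat 1"
    using orthogonal_matrix[of "transpose Q"] by simp
  also have "\<dots> \<longleftrightarrow> (\<forall>i j. Q $ i \<bullet> Q $ j = (if i = j then 1 else 0))"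
    by (simp add: vec_eq_iff matrix_matrix_mult_def transpose_def inner_vec_def mat_def mult.commute)
  finally show ?thesis .
qed

lemma orthogonal_matrix_with_row:
  fixes a :: "real^'n"
  assumes "norm a = 1"
  obtains Q where "orthogonal_matrix Q" "Q $ k = a"
proof -
  obtain A where A: "orthogonal_matrix A" "A *v axis k 1 = a"
    using orthogonal_matrix_exists_basis[OF assms] by blast
  show thesis
  proof (rule that[of "transpose A"])
    show "orthogonal_matrix (transpose A)"
      using A(1) by simp
    show "transpose A $ k = a"
      using A(2) by (auto simp: vec_eq_iff transpose_def matrix_vector_mult_def axis_def
          if_distrib cong: if_cong)
  qed
qed

lemma orthogonal_matrix_row_expansion:
  fixes Q :: "real^'n^'n"
  assumes "orthogonal_matrix Q"
  shows "v = (\<Sum>i\<in>UNIV. (v \<bullet> Q $ i) *\<^sub>R Q $ i)"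
proof -
  have "v = transpose Q *v (Q *v v)"
    using assms by (simp add: orthogonal_matrix_def matrix_vector_mul_assoc)
  also have "\<dots> = (\<Sum>i\<in>UNIV. (v \<bullet> Q $ i) *\<^sub>R Q $ i)"
    unfolding vec_eq_iff
    by (simp add: matrix_vector_mult_def transpose_def inner_vec_def sum_distrib_right mult.commute)
  finally show ?thesis .
qed

lemma matrix_mult_transpose_nth: "(P ** transpose Q) $ i $ j = P $ i \<bullet> Q $ j"
  for P :: "real^'n^'m" and Q :: "real^'n^'k"
  by (simp add: matrix_matrix_mult_def transpose_def inner_vec_def mult.commute)

lemma orthonormal_3_iff:
  "orthogonal_matrix (vector [a, b, c] :: real^3^3) \<longleftrightarrow>
     a \<bullet> a = 1 \<and> b \<bullet> b = 1 \<and> c \<bullet> c = 1 \<and> a \<bullet> b = 0 \<and> a \<bullet> c = 0 \<and> b \<bullet> c = 0"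
  by (auto simp: orthogonal_matrix_iff_orthonormal_rows forall_3 inner_commute)

definition wedge_matrix :: "real^'n \<Rightarrow> real^'n \<Rightarrow> real^'n^'n" where
  "wedge_matrix a b = (\<chi> i j. a $ i * b $ j - b $ i * a $ j)"

lemma wedge_matrix_mult: "wedge_matrix a b *v x = (b \<bullet> x) *\<^sub>R a - (a \<bullet> x) *\<^sub>R b"
  by (simp add: wedge_matrix_def vec_eq_iff matrix_vector_mult_def inner_vec_def sum_distrib_left
      sum_subtractf algebra_simps)

lemma inner_wedge_matrix_mult: "(wedge_matrix a b *v x) \<bullet> y = - (x \<bullet> (wedge_matrix a b *v y))"
  unfolding wedge_matrix_mult by (simp add: inner_diff_left inner_diff_right inner_commute mult.commute)

lemma smooth_on_wedge_matrix:
  assumes "open I" "smooth_on I a" "smooth_on I b"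
  shows "smooth_on I (\<lambda>t. wedge_matrix (a t) (b t))"
proof -
  have "smooth_on I (\<lambda>t. a t $ i * b t $ j - b t $ i * a t $ j)" for i j
    using assms by (intro smooth_on_diff smooth_on_bilinear[OF _ bounded_bilinear_mult]
        smooth_on_linear[OF _ bounded_linear_vec_nth])
  then show ?thesis
    unfolding wedge_matrix_def by (auto intro!: smooth_on_vec[OF assms(1)])
qed

(* Row i0 is u; the other rows span the normal space of u and are parallel for its normal
   connection: their derivatives are multiples of u. For u = T this is a Bishop frame. *)
definition normal_parallel_frame ::
    "real set \<Rightarrow> 'n \<Rightarrow> (real \<Rightarrow> real^'n) \<Rightarrow> (real \<Rightarrow> real^'n^'n) \<Rightarrow> bool" where
  "normal_parallel_frame I i0 u F \<longleftrightarrow> smooth_on I F \<and>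
     (\<forall>t\<in>I. orthogonal_matrix (F t) \<and> F t $ i0 = u t \<and>
        (\<forall>i. i \<noteq> i0 \<longrightarrow>
           ((\<lambda>s. F s $ i) has_vector_derivative - (vector_derivative u (at t) \<bullet> F t $ i) *\<^sub>R u t) (at t)))"

lemma normal_parallel_frameD:
  assumes F: "normal_parallel_frame I i0 u F" and I: "open I"
  shows "smooth_on I (\<lambda>t. F t $ i)"
    and "t \<in> I \<Longrightarrow> F t $ i \<bullet> F t $ j = (if i = j then 1 else 0)"
    and "t \<in> I \<Longrightarrow> F t $ i0 = u t"
    and "t \<in> I \<Longrightarrow> i \<noteq> i0 \<Longrightarrow>
      ((\<lambda>s. F s $ i) has_vector_derivative - (vector_derivative u (at t) \<bullet> F t $ i) *\<^sub>R u t) (at t)"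
proof -
  have "smooth_on I F"
    using F by (simp add: normal_parallel_frame_def)
  then show "smooth_on I (\<lambda>t. F t $ i)"
    by (rule smooth_on_linear[OF I bounded_linear_vec_nth])
qed (use F in \<open>auto simp: normal_parallel_frame_def orthogonal_matrix_iff_orthonormal_rows\<close>)

lemma normal_parallel_frame_exists:
  fixes u :: "real \<Rightarrow> real^'n" and i0 :: 'n
  assumes I: "open_interval I" and u: "smooth_on I u" "\<And>t. t \<in> I \<Longrightarrow> norm (u t) = 1"
  obtains F where "normal_parallel_frame I i0 u F"
proof -
  have I': "is_interval I" "open I" and "I \<noteq> {}"
    using I by (auto simp: open_interval_def)
  then obtain t0 where t0: "t0 \<in> I"
    by blast
  define u' where "u' t = vector_derivative u (at t)" for t
  have du: "(u has_vector_derivative u' t) (at t)" if "t \<in> I" for t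
    using smooth_on_has_vector_derivative[OF u(1) that] by (simp add: u'_def)
  have uu: "u t \<bullet> u t = 1" if "t \<in> I" for t
    using u(2)[OF that] by (simp add: norm_eq_1)
  have u'u: "u' t \<bullet> u t = 0" if "t \<in> I" for t
    using inner_derivatives_sum_eq_0[OF I'(2) that du[OF that] du[OF that] uu] by (simp add: inner_commute)
  (* A is skew, so solutions of V' = A V keep their inner products; u is one of them, and on
     solutions orthogonal to u the equation reads V' = - (u' . V) u. *)
  define A where "A t = wedge_matrix (u' t) (u t)" for t
  have "smooth_on I A"
    unfolding A_def u'_def using smooth_on_wedge_matrix[OF I'(2) smooth_on_vector_derivative[OF I'(2) u(1)] u(1)] .
  obtain Q where Q: "orthogonal_matrix Q" "Q $ i0 = u t0"
    using orthogonal_matrix_with_row[OF u(2)[OF t0]] by blast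
  obtain V where V: "\<And>i. V i t0 = Q $ i" "\<And>i t. t \<in> I \<Longrightarrow> (V i has_vector_derivative A t *v V i t) (at t)"
    "\<And>i. smooth_on I (V i)"
    using smooth_linear_ode_solutions_exist[OF I' t0 \<open>smooth_on I A\<close>] by blast
  define W where "W i = (if i = i0 then u else V i)" for i
  have W: "(W i has_vector_derivative A t *v W i t) (at t)" if "t \<in> I" for i t
    using V(2)[OF that] du[OF that] uu[OF that] u'u[OF that] by (simp add: W_def A_def wedge_matrix_mult)
  have W_inner: "W i t \<bullet> W j t = (if i = j then 1 else 0)" if "t \<in> I" for i j t
  proof -
    have "W i t \<bullet> W j t = W i t0 \<bullet> W j t0"
      using inner_constant_if_skew[where F = "\<lambda>t x. A t *v x", OF I'(1) that t0 W W]
      by (simp add: A_def inner_wedge_matrix_mult)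
    also have "\<dots> = (if i = j then 1 else 0)"
      using Q V(1) by (simp add: W_def orthogonal_matrix_iff_orthonormal_rows flip: Q(2))
    finally show ?thesis .
  qed
  define F where "F t = (\<chi> i. W i t)" for t
  have "smooth_on I F"
    unfolding F_def by (rule smooth_on_vec[OF I'(2)]) (simp add: W_def u(1) V(3))
  moreover have "orthogonal_matrix (F t)" if "t \<in> I" for t
    using W_inner[OF that] by (simp add: orthogonal_matrix_iff_orthonormal_rows F_def)
  moreover have "((\<lambda>s. F s $ i) has_vector_derivative - (u' t \<bullet> F t $ i) *\<^sub>R u t) (at t)"
    if "t \<in> I" "i \<noteq> i0" for t i
    using W[OF that(1), of i] W_inner[OF that(1), of i0 i] that(2)
    by (simp add: F_def A_def wedge_matrix_mult W_def)
  ultimately have "normal_parallel_frame I i0 u F"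
    by (simp add: normal_parallel_frame_def F_def W_def u'_def)
  then show thesis ..
qed

lemma exists_unit_vector_not_parallel:
  fixes k :: "real \<Rightarrow> 'a::euclidean_space"
  assumes dim: "2 < DIM('a)" and k: "\<And>t. t \<in> I \<Longrightarrow> k differentiable (at t)"
  obtains u where "norm u = 1" "\<And>t c. t \<in> I \<Longrightarrow> k t = c *\<^sub>R u \<Longrightarrow> c = 0"
proof -
  define f where "f p = snd p *\<^sub>R k (fst p)" for p :: "real \<times> real"
  have "f differentiable (at p)" if "p \<in> I \<times> UNIV" for p
  proof -
    have "(k \<circ> fst) differentiable (at p)"
      using that k by (intro differentiable_chain_at bounded_linear_imp_differentiable[OF bounded_linear_fst]) auto
    then show ?thesis
      unfolding f_def o_def by (rule differentiable_scaleR[OF bounded_linear_imp_differentiable[OF bounded_linear_snd]])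
  qed
  then have "negligible (f ` (I \<times> UNIV))"
    using dim by (intro negligible_differentiable_image_lowdim differentiable_at_imp_differentiable_on) auto
  then have "insert 0 (f ` (I \<times> UNIV)) \<noteq> UNIV"
    by (metis negligible_insert non_negligible_UNIV)
  then obtain v where v: "v \<noteq> 0" "v \<notin> f ` (I \<times> UNIV)"
    by blast
  show thesis
  proof (rule that[of "sgn v"])
    show "norm (sgn v) = 1"
      using v(1) by (simp add: norm_sgn)
    fix t c assume t: "t \<in> I" and "k t = c *\<^sub>R sgn v"
    show "c = 0"
    proof (rule ccontr)
      assume "c \<noteq> 0"
      then have "v = f (t, norm v / c)"
        using \<open>k t = c *\<^sub>R sgn v\<close> v(1) by (simp add: f_def sgn_div_norm)
      with v(2) t show False
        by auto
    qed
  qed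
qed

lemma frame_with_fixed_axis:
  fixes k :: "real \<Rightarrow> real^3" and u :: "real^3"
  assumes I: "open I" and k: "smooth_on I k" and u: "norm u = 1"
    and not_parallel: "\<And>t. t \<in> I \<Longrightarrow> k t \<noteq> (k t \<bullet> u) *\<^sub>R u"
  obtains e where "smooth_on I e"
    "\<And>t. t \<in> I \<Longrightarrow> orthogonal_matrix (vector [e t, u, cross3 u (e t)])"
    "\<And>t. t \<in> I \<Longrightarrow> k t \<bullet> cross3 u (e t) = 0"
proof
  define w where "w t = k t - (k t \<bullet> u) *\<^sub>R u" for t
  have w: "w t \<noteq> 0" "w t \<bullet> u = 0" if "t \<in> I" for t
    using not_parallel[OF that] u by (auto simp: w_def inner_diff_left norm_eq_1)
  have "smooth_on I w"
    unfolding w_def using I k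
    by (intro smooth_on_diff smooth_on_bilinear[OF _ bounded_bilinear_scaleR]
        smooth_on_bilinear[OF _ bounded_bilinear_inner] smooth_on_const)
  then show "smooth_on I (\<lambda>t. sgn (w t))"
    using smooth_on_sgn[OF I] w(1) by blast
  fix t assume t: "t \<in> I"
  have "sgn (w t) \<bullet> sgn (w t) = 1"
    using w(1)[OF t] by (simp add: norm_sgn flip: norm_eq_1)
  moreover have "sgn (w t) \<bullet> u = 0" "u \<bullet> u = 1"
    using w(2)[OF t] u by (simp_all add: sgn_div_norm flip: norm_eq_1)
  ultimately show "orthogonal_matrix (vector [sgn (w t), u, cross3 u (sgn (w t))])"
    using norm_cross[of u "sgn (w t)"] dot_cross_self[of u "sgn (w t)"]
    by (simp add: orthonormal_3_iff power2_norm_eq_inner inner_commute)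
  have "k t = norm (w t) *\<^sub>R sgn (w t) + (k t \<bullet> u) *\<^sub>R u"
    using w(1)[OF t] by (simp add: sgn_div_norm) (simp add: w_def)
  then have "k t \<bullet> cross3 u (sgn (w t)) =
      (norm (w t) *\<^sub>R sgn (w t) + (k t \<bullet> u) *\<^sub>R u) \<bullet> cross3 u (sgn (w t))"
    by (rule arg_cong)
  then show "k t \<bullet> cross3 u (sgn (w t)) = 0"
    using dot_cross_self[of u "sgn (w t)"] dot_cross_self[of "sgn (w t)" u] by (simp add: inner_add_left)
qed

section \<open>Frames along a curve\<close>

lemma coeff_matrix_orthogonal:
  assumes "\<And>t. t \<in> I \<Longrightarrow> orthogonal_matrix (Z t)"
    and "\<And>t. t \<in> I \<Longrightarrow> (Z has_vector_derivative Z' t) (at t)"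
  shows "coeff_matrix I Z (\<lambda>t. Z' t ** transpose (Z t))"
  unfolding coeff_matrix_def
proof
  fix t assume "t \<in> I"
  then have "Z' t = Z' t ** (transpose (Z t) ** Z t)"
    using assms(1) by (simp add: orthogonal_matrix_def)
  then have "Z' t = (Z' t ** transpose (Z t)) ** Z t"
    by (simp only: matrix_mul_assoc)
  then show "(Z has_vector_derivative Z' t ** transpose (Z t) ** Z t) (at t)"
    using assms(2)[OF \<open>t \<in> I\<close>] by simp
qed

lemma frame_of_typeI:
  assumes "frame_on I \<gamma> Z" "smooth_on I x1" "smooth_on I x2" "smooth_on I x3"
    and "coeff_matrix I Z X" "\<And>t. t \<in> I \<Longrightarrow> X t = M (x1 t) (x2 t) (x3 t)"
  shows "frame_of_type M I \<gamma> Z"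
proof -
  have "permute_frame id Z = Z"
    by (simp add: permute_frame_def fun_eq_iff)
  moreover have "coeff_matrix I Z (\<lambda>t. M (x1 t) (x2 t) (x3 t))"
    using assms(5,6) by (simp add: coeff_matrix_def)
  moreover have "id permutes (UNIV - {1::4})"
    by (rule permutes_id)
  ultimately show ?thesis
    unfolding frame_of_type_def using assms(1-4) by metis
qed

lemma smooth_on_tangent:
  assumes "two_regular I \<gamma>"
  shows "smooth_on I (tangent \<gamma>)"
proof -
  have "open I" "smooth_on I \<gamma>"
    using assms by (simp_all add: two_regular_def arclength_curve_def open_interval_def)
  then show ?thesis
    unfolding tangent_def[abs_def] by (rule smooth_on_vector_derivative)
qed

locale bishop_framed_curve =
  fixes I :: "real set" and \<gamma> :: "real \<Rightarrow> real^4" and B :: "real \<Rightarrow> real^4^4"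
  assumes two_regular: "two_regular I \<gamma>"
    and bishop_frame: "normal_parallel_frame I 1 (tangent \<gamma>) B"
begin

abbreviation T :: "real \<Rightarrow> real^4" where
  "T \<equiv> tangent \<gamma>"

definition T' :: "real \<Rightarrow> real^4" where
  "T' t = vector_derivative T (at t)"

lemma open_interval_I: "open_interval I"
  using two_regular by (simp add: two_regular_def arclength_curve_def)

lemma open_I: "open I"
  using open_interval_I by (simp add: open_interval_def)

lemma smooth_T: "smooth_on I T"
  using smooth_on_tangent[OF two_regular] .

lemma smooth_T': "smooth_on I T'"
  unfolding T'_def[abs_def] using smooth_on_vector_derivative[OF open_I smooth_T] .

lemma T_has_vector_derivative: "t \<in> I \<Longrightarrow> (T has_vector_derivative T' t) (at t)"
  unfolding T'_def by (rule smooth_on_has_vector_derivative[OF smooth_T])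

lemma inner_T_T: "t \<in> I \<Longrightarrow> T t \<bullet> T t = 1"
  using two_regular by (simp add: two_regular_def arclength_curve_def norm_eq_1)

lemma inner_T'_T: "t \<in> I \<Longrightarrow> T' t \<bullet> T t = 0"
  using inner_derivatives_sum_eq_0[OF open_I _ T_has_vector_derivative T_has_vector_derivative inner_T_T]
  by (simp add: inner_commute)

lemma T'_nonzero: "t \<in> I \<Longrightarrow> T' t \<noteq> 0"
  using two_regular by (simp add: two_regular_def T'_def)

lemma B_rows: "t \<in> I \<Longrightarrow> B t $ i \<bullet> B t $ j = (if i = j then 1 else 0)"
  and B_1: "t \<in> I \<Longrightarrow> B t $ 1 = T t"
  and B_row_has_vector_derivative:
    "t \<in> I \<Longrightarrow> i \<noteq> 1 \<Longrightarrow> ((\<lambda>s. B s $ i) has_vector_derivative - (T' t \<bullet> B t $ i) *\<^sub>R T t) (at t)"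
  and smooth_B_row: "smooth_on I (\<lambda>t. B t $ i)"
  using normal_parallel_frameD[OF bishop_frame open_I] by (simp_all add: T'_def)

definition normal :: "real \<Rightarrow> real^3 \<Rightarrow> real^4" where
  "normal t v = v $ 1 *\<^sub>R B t $ 2 + v $ 2 *\<^sub>R B t $ 3 + v $ 3 *\<^sub>R B t $ 4"

definition kappa :: "real \<Rightarrow> real^3" where
  "kappa t = vector [T' t \<bullet> B t $ 2, T' t \<bullet> B t $ 3, T' t \<bullet> B t $ 4]"

lemma inner_normal_normal: "t \<in> I \<Longrightarrow> normal t v \<bullet> normal t w = v \<bullet> w"
  by (simp add: normal_def inner_add_left inner_add_right B_rows) (simp add: inner_vec_def sum_3)

lemma inner_T_normal: "t \<in> I \<Longrightarrow> T t \<bullet> normal t v = 0" "t \<in> I \<Longrightarrow> normal t v \<bullet> T t = 0"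
  by (simp_all add: normal_def inner_add_left inner_add_right B_rows flip: B_1)

lemma T'_eq_normal_kappa: "t \<in> I \<Longrightarrow> T' t = normal t (kappa t)"
  using orthogonal_matrix_row_expansion[of "B t" "T' t"] bishop_frame inner_T'_T
  by (simp add: normal_parallel_frame_def sum_4 normal_def kappa_def B_1)

lemma kappa_nonzero: "t \<in> I \<Longrightarrow> kappa t \<noteq> 0"
  using T'_eq_normal_kappa T'_nonzero by (fastforce simp: normal_def)

lemma smooth_kappa: "smooth_on I kappa"
proof (rule smooth_on_vec[OF open_I])
  fix i :: 3
  have "smooth_on I (\<lambda>t. T' t \<bullet> B t $ j)" for j
    by (rule smooth_on_bilinear[OF open_I bounded_bilinear_inner smooth_T' smooth_B_row])
  then show "smooth_on I (\<lambda>t. kappa t $ i)"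
    using exhaust_3[of i] by (auto simp: kappa_def)
qed

lemma smooth_normal:
  assumes "smooth_on I v"
  shows "smooth_on I (\<lambda>t. normal t (v t))"
proof -
  have "smooth_on I (\<lambda>t. v t $ j *\<^sub>R B t $ i)" for i j
    using smooth_on_linear[OF open_I bounded_linear_vec_nth assms]
    by (rule smooth_on_bilinear[OF open_I bounded_bilinear_scaleR _ smooth_B_row])
  then show ?thesis
    unfolding normal_def by (intro smooth_on_add[OF open_I])
qed

lemma normal_has_vector_derivative:
  assumes t: "t \<in> I" and v: "(v has_vector_derivative v') (at t)"
  shows "((\<lambda>s. normal s (v s)) has_vector_derivative normal t v' - (v t \<bullet> kappa t) *\<^sub>R T t) (at t)"
proof -
  have "((\<lambda>s. v s $ j *\<^sub>R B s $ i) has_vector_derivative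
      v t $ j *\<^sub>R (- (T' t \<bullet> B t $ i) *\<^sub>R T t) + v' $ j *\<^sub>R B t $ i) (at t)" if "i \<noteq> 1" for i j
    using bounded_bilinear.has_vector_derivative[OF bounded_bilinear_scaleR
        bounded_linear.has_vector_derivative[OF bounded_linear_vec_nth v]
        B_row_has_vector_derivative[OF t that]] .
  then have "((\<lambda>s. normal s (v s)) has_vector_derivative
      (v t $ 1 *\<^sub>R (- (T' t \<bullet> B t $ 2) *\<^sub>R T t) + v' $ 1 *\<^sub>R B t $ 2) +
      (v t $ 2 *\<^sub>R (- (T' t \<bullet> B t $ 3) *\<^sub>R T t) + v' $ 2 *\<^sub>R B t $ 3) +
      (v t $ 3 *\<^sub>R (- (T' t \<bullet> B t $ 4) *\<^sub>R T t) + v' $ 3 *\<^sub>R B t $ 4)) (at t)"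
    unfolding normal_def by (intro has_vector_derivative_add) auto
  then show ?thesis
    by (rule has_vector_derivative_eq_rhs) (simp add: normal_def kappa_def inner_vec_def sum_3 algebra_simps)
qed

lemma rotated_bishop_frame:
  fixes a b c :: "real \<Rightarrow> real^3"
  assumes smooth: "smooth_on I a" "smooth_on I b" "smooth_on I c"
    and orth: "\<And>t. t \<in> I \<Longrightarrow> orthogonal_matrix (vector [a t, b t, c t])"
    and a': "\<And>t. t \<in> I \<Longrightarrow> (a has_vector_derivative a' t) (at t)"
    and b': "\<And>t. t \<in> I \<Longrightarrow> (b has_vector_derivative b' t) (at t)"
    and c': "\<And>t. t \<in> I \<Longrightarrow> (c has_vector_derivative c' t) (at t)"
  defines "Z \<equiv> \<lambda>t. vector [T t, normal t (a t), normal t (b t), normal t (c t)]"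
  shows "frame_on I \<gamma> Z"
    and "coeff_matrix I Z (\<lambda>t. vector [
           vector [0, kappa t \<bullet> a t, kappa t \<bullet> b t, kappa t \<bullet> c t],
           vector [- (kappa t \<bullet> a t), 0, a' t \<bullet> b t, a' t \<bullet> c t],
           vector [- (kappa t \<bullet> b t), b' t \<bullet> a t, 0, b' t \<bullet> c t],
           vector [- (kappa t \<bullet> c t), c' t \<bullet> a t, c' t \<bullet> b t, 0]])"
proof -
  have on: "a t \<bullet> a t = 1" "b t \<bullet> b t = 1" "c t \<bullet> c t = 1"
    "a t \<bullet> b t = 0" "a t \<bullet> c t = 0" "b t \<bullet> c t = 0"
    "b t \<bullet> a t = 0" "c t \<bullet> a t = 0" "c t \<bullet> b t = 0" if "t \<in> I" for t
    using orth[OF that] by (simp_all add: orthonormal_3_iff inner_commute)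
  have unit_deriv: "a t \<bullet> a' t = 0" "b t \<bullet> b' t = 0" "c t \<bullet> c' t = 0" if "t \<in> I" for t
    using inner_derivatives_sum_eq_0[OF open_I that a'[OF that] a'[OF that], of 1]
      inner_derivatives_sum_eq_0[OF open_I that b'[OF that] b'[OF that], of 1]
      inner_derivatives_sum_eq_0[OF open_I that c'[OF that] c'[OF that], of 1]
      on by (simp_all add: inner_commute)
  have orth_Z: "orthogonal_matrix (Z t)" if "t \<in> I" for t
    unfolding orthogonal_matrix_iff_orthonormal_rows forall_4 Z_def
    using that by (simp add: inner_T_T inner_T_normal inner_normal_normal on)
  have "smooth_on I Z"
    unfolding Z_def using smooth
    by (intro smooth_on_vector_4 open_I smooth_T smooth_normal)
  then show "frame_on I \<gamma> Z"
    using orth_Z by (simp add: frame_on_def Z_def)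
  define Z' :: "real \<Rightarrow> real^4^4" where "Z' t = vector [T' t, normal t (a' t) - (a t \<bullet> kappa t) *\<^sub>R T t,
      normal t (b' t) - (b t \<bullet> kappa t) *\<^sub>R T t, normal t (c' t) - (c t \<bullet> kappa t) *\<^sub>R T t]" for t
  have "(Z has_vector_derivative Z' t) (at t)" if "t \<in> I" for t
    unfolding Z_def Z'_def using that
    by (intro has_vector_derivative_vector_4 T_has_vector_derivative normal_has_vector_derivative a' b' c')
  then have "coeff_matrix I Z (\<lambda>t. Z' t ** transpose (Z t))"
    using coeff_matrix_orthogonal orth_Z by blast
  moreover have "Z' t ** transpose (Z t) = vector [
           vector [0, kappa t \<bullet> a t, kappa t \<bullet> b t, kappa t \<bullet> c t],
           vector [- (kappa t \<bullet> a t), 0, a' t \<bullet> b t, a' t \<bullet> c t],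
           vector [- (kappa t \<bullet> b t), b' t \<bullet> a t, 0, b' t \<bullet> c t],
           vector [- (kappa t \<bullet> c t), c' t \<bullet> a t, c' t \<bullet> b t, 0]]" if "t \<in> I" for t
    unfolding vec_eq_iff forall_4 matrix_mult_transpose_nth Z_def Z'_def
    using that by (simp add: inner_diff_left inner_diff_right inner_T_T inner_T_normal inner_normal_normal inner_T'_T
        T'_eq_normal_kappa unit_deriv inner_commute)
  ultimately show "coeff_matrix I Z (\<lambda>t. vector [
           vector [0, kappa t \<bullet> a t, kappa t \<bullet> b t, kappa t \<bullet> c t],
           vector [- (kappa t \<bullet> a t), 0, a' t \<bullet> b t, a' t \<bullet> c t],
           vector [- (kappa t \<bullet> b t), b' t \<bullet> a t, 0, b' t \<bullet> c t],
           vector [- (kappa t \<bullet> c t), c' t \<bullet> a t, c' t \<bullet> b t, 0]])"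
    by (simp add: coeff_matrix_def)
qed

lemma frame_of_type_C: "\<exists>Z. frame_of_type typeC_matrix I \<gamma> Z"
proof -
  have "kappa differentiable (at t)" if "t \<in> I" for t
    using smooth_on_has_vector_derivative[OF smooth_kappa that] by (rule differentiableI_vector)
  then obtain u :: "real^3" where u: "norm u = 1" "\<And>t c. t \<in> I \<Longrightarrow> kappa t = c *\<^sub>R u \<Longrightarrow> c = 0"
    using exists_unit_vector_not_parallel[where k = kappa and I = I] by auto
  have "kappa t \<noteq> (kappa t \<bullet> u) *\<^sub>R u" if "t \<in> I" for t
    using u(2)[OF that, of "kappa t \<bullet> u"] kappa_nonzero[OF that] by auto
  then obtain e1 where e1: "smooth_on I e1" "\<And>t. t \<in> I \<Longrightarrow> orthogonal_matrix (vector [e1 t, u, cross3 u (e1 t)])"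
    "\<And>t. t \<in> I \<Longrightarrow> kappa t \<bullet> cross3 u (e1 t) = 0"
    using frame_with_fixed_axis[OF open_I smooth_kappa u(1)] by blast
  define e3 where "e3 t = cross3 u (e1 t)" for t
  have smooth_e: "smooth_on I e1" "smooth_on I e3"
    unfolding e3_def using e1(1) open_I
    by (auto intro: smooth_on_bilinear[OF _ bilinear_cross[unfolded bilinear_conv_bounded_bilinear]
        smooth_on_const])
  have orth: "orthogonal_matrix (vector [e1 t, u, e3 t])" if "t \<in> I" for t
    using e1(2)[OF that] by (simp add: e3_def)
  have perp: "e1 t \<bullet> u = 0" "e3 t \<bullet> u = 0" "e3 t \<bullet> e1 t = 0" if "t \<in> I" for t
    using orth[OF that] by (simp_all add: orthonormal_3_iff inner_commute)
  define e1' where "e1' t = vector_derivative e1 (at t)" for t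
  define e3' where "e3' t = vector_derivative e3 (at t)" for t
  have de: "(e1 has_vector_derivative e1' t) (at t)" "(e3 has_vector_derivative e3' t) (at t)"
    if "t \<in> I" for t
    using smooth_on_has_vector_derivative[OF smooth_e(1) that]
      smooth_on_has_vector_derivative[OF smooth_e(2) that] by (simp_all add: e1'_def e3'_def)
  note Z = rotated_bishop_frame[OF smooth_e(1) smooth_on_const[OF open_I] smooth_e(2) orth
      de(1) has_vector_derivative_const de(2)]
  have "vector [
      vector [0, kappa t \<bullet> e1 t, kappa t \<bullet> u, kappa t \<bullet> e3 t],
      vector [- (kappa t \<bullet> e1 t), 0, e1' t \<bullet> u, e1' t \<bullet> e3 t],
      vector [- (kappa t \<bullet> u), 0 \<bullet> e1 t, 0, 0 \<bullet> e3 t],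
      vector [- (kappa t \<bullet> e3 t), e3' t \<bullet> e1 t, e3' t \<bullet> u, 0]] =
    typeC_matrix (kappa t \<bullet> e1 t) (kappa t \<bullet> u) (e1' t \<bullet> e3 t)" if t: "t \<in> I" for t
  proof -
    have "e1' t \<bullet> u = 0" "e3' t \<bullet> u = 0" "e3' t \<bullet> e1 t = - (e1' t \<bullet> e3 t)"
      using inner_derivatives_sum_eq_0[OF open_I t de(1)[OF t] has_vector_derivative_const, of u 0]
        inner_derivatives_sum_eq_0[OF open_I t de(2)[OF t] has_vector_derivative_const, of u 0]
        inner_derivatives_sum_eq_0[OF open_I t de(2)[OF t] de(1)[OF t], of 0]
        perp by (auto simp: inner_commute add_eq_0_iff)
    moreover have "kappa t \<bullet> e3 t = 0"
      using e1(3)[OF t] by (simp add: e3_def)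
    ultimately show ?thesis
      by (simp add: typeC_matrix_def)
  qed
  moreover have "smooth_on I (\<lambda>t. kappa t \<bullet> e1 t)" "smooth_on I (\<lambda>t. kappa t \<bullet> u)"
    "smooth_on I (\<lambda>t. e1' t \<bullet> e3 t)"
    unfolding e1'_def using open_I smooth_kappa smooth_e smooth_on_vector_derivative[OF _ smooth_e(1)]
    by (auto intro!: smooth_on_bilinear[OF _ bounded_bilinear_inner] smooth_on_const)
  ultimately show ?thesis
    using frame_of_typeI[OF Z(1) _ _ _ Z(2)] by blast
qed

lemma frame_of_type_D: "\<exists>Z. frame_of_type typeD_matrix I \<gamma> Z"
proof -
  define n where "n t = sgn (kappa t)" for t
  have smooth_n: "smooth_on I n"
    unfolding n_def using smooth_on_sgn[OF open_I smooth_kappa kappa_nonzero] .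
  have kappa_n: "kappa t \<bullet> v = norm (kappa t) * (n t \<bullet> v)" if "t \<in> I" for t v
    using kappa_nonzero[OF that] by (simp add: n_def sgn_div_norm)
  have "norm (n t) = 1" if "t \<in> I" for t
    using kappa_nonzero[OF that] by (simp add: n_def norm_sgn)
  then obtain F where "normal_parallel_frame I 1 n F"
    using normal_parallel_frame_exists open_interval_I smooth_n by blast
  note F = normal_parallel_frameD[OF this open_I]
  define n' where "n' t = vector_derivative n (at t)" for t
  have dn: "(n has_vector_derivative n' t) (at t)" if "t \<in> I" for t
    using smooth_on_has_vector_derivative[OF smooth_n that] by (simp add: n'_def)
  have orth: "orthogonal_matrix (vector [n t, F t $ 2, F t $ 3])" if "t \<in> I" for t
    using F(2)[OF that] by (simp add: orthonormal_3_iff flip: F(3)[OF that])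
  have dF: "((\<lambda>s. F s $ 2) has_vector_derivative - (n' t \<bullet> F t $ 2) *\<^sub>R n t) (at t)"
    "((\<lambda>s. F s $ 3) has_vector_derivative - (n' t \<bullet> F t $ 3) *\<^sub>R n t) (at t)" if "t \<in> I" for t
    using F(4)[OF that] by (simp_all add: n'_def)
  note Z = rotated_bishop_frame[OF smooth_n F(1) F(1) orth dn dF]
  have "vector [
      vector [0, kappa t \<bullet> n t, kappa t \<bullet> F t $ 2, kappa t \<bullet> F t $ 3],
      vector [- (kappa t \<bullet> n t), 0, n' t \<bullet> F t $ 2, n' t \<bullet> F t $ 3],
      vector [- (kappa t \<bullet> F t $ 2), (- (n' t \<bullet> F t $ 2) *\<^sub>R n t) \<bullet> n t, 0,
        (- (n' t \<bullet> F t $ 2) *\<^sub>R n t) \<bullet> F t $ 3],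
      vector [- (kappa t \<bullet> F t $ 3), (- (n' t \<bullet> F t $ 3) *\<^sub>R n t) \<bullet> n t,
        (- (n' t \<bullet> F t $ 3) *\<^sub>R n t) \<bullet> F t $ 2, 0]] =
    typeD_matrix (kappa t \<bullet> n t) (n' t \<bullet> F t $ 2) (n' t \<bullet> F t $ 3)" if t: "t \<in> I" for t
    using orth[OF t] by (simp add: orthonormal_3_iff kappa_n[OF t] typeD_matrix_def)
  moreover have "smooth_on I (\<lambda>t. kappa t \<bullet> n t)" "smooth_on I (\<lambda>t. n' t \<bullet> F t $ 2)"
    "smooth_on I (\<lambda>t. n' t \<bullet> F t $ 3)"
    unfolding n'_def using open_I smooth_kappa smooth_n F(1) smooth_on_vector_derivative[OF _ smooth_n]
    by (auto intro!: smooth_on_bilinear[OF _ bounded_bilinear_inner])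
  ultimately show ?thesis
    using frame_of_typeI[OF Z(1) _ _ _ Z(2)] by blast
qed

end

theorem theorem2:
  fixes I :: "real set" and \<gamma> :: "real \<Rightarrow> real^4"
  assumes "two_regular I \<gamma>"
  shows "(\<exists>Z. frame_of_type typeC_matrix I \<gamma> Z) \<and> (\<exists>Z. frame_of_type typeD_matrix I \<gamma> Z)"
proof -
  have "open_interval I" "\<And>t. t \<in> I \<Longrightarrow> norm (tangent \<gamma> t) = 1"
    using assms by (simp_all add: two_regular_def arclength_curve_def)
  then obtain B where "normal_parallel_frame I 1 (tangent \<gamma>) B"
    using normal_parallel_frame_exists smooth_on_tangent[OF assms] by blast
  then interpret bishop_framed_curve I \<gamma> B
    using assms by unfold_locales
  show ?thesis
    using frame_of_type_C frame_of_type_D by blast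
qed

end
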